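(* In the mirror triangle method with stochastic $(\delta,L)$-oracle (see context), write $l_f^\delta(x;y)=f_\delta(y)+\langle\tilde\nabla^{m_{k+1}}f_\delta(y),x-y\rangle$. Then at every step $k+1$, for all $x\in Q$, $$l_f^\delta(x_{k+1};y_{k+1})+\frac{L_{k+1}}2\|x_{k+1}-y_{k+1}\|^2+h(x_{k+1})\le\frac{A_k}{A_{k+1}}\big(l_f^\delta(x_k;y_{k+1})+h(x_k)\big)+\frac{\alpha_{k+1}}{A_{k+1}}\Big(l_f^\delta(x;y_{k+1})+h(x)+\frac1{\alpha_{k+1}}V(x,u_k)-\frac1{\alpha_{k+1}}V(x,u_{k+1})\Big).$$
   Context: $\mathbb{R}^n$ carries the Euclidean norm; $Q$ closed convex, $D_Q\ge\max_{x,y\in Q}\|x-y\|$ finite; $f:Q\to\mathbb{R}$ convex with $L$-Lipschitz gradient; $h$ convex on $Q$. Prox-function $d$ ($C^1$, $1$-strongly convex), $V(x,y)=d(x)-d(y)-\langle\nabla d(y),x-y\rangle$. Stochastic $(\delta,L)$-oracle: for query $y\in Q$ returns $(f_\delta(y),\nabla f_\delta(y;\xi))$ such that for some vector $\nabla f_\delta(y)$: $0\le f(x)-f_\delta(y)-\langle\nabla f_\delta(y),x-y\rangle\le\frac L2\|x-y\|^2+\delta$ for all $x\in Q$; $\mathbb{E}\nabla f_\delta(y;\xi)=\nabla f_\delta(y)$; $\mathbb{E}\exp(\|\nabla f_\delta(y;\xi)-\nabla f_\delta(y)\|^2/D)\le e$ ($D>0$). Method with $x_0\in Q$, $\varepsilon>0$,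 $\beta\in(0,1)$: $N=\lceil2\sqrt3\sqrt LD_Q/\sqrt\varepsilon\rceil$, $\Omega=\sqrt{2\ln(N/\beta)}$, $\tilde\Omega=1+2\Omega+\Omega^2$; $y_0=u_0=x_0$, $L_1=L/2$, $\alpha_0=A_0=0$. Step $k+1$ with current $L_{k+1}$: (i) $\alpha_{k+1}$ largest root of $A_k+\alpha=L_{k+1}\alpha^2$, $A_{k+1}=A_k+\alpha_{k+1}$; (ii) $y_{k+1}=(\alpha_{k+1}u_k+A_kx_k)/A_{k+1}$; (iii) $m_{k+1}=\lceil3D\tilde\Omega\alpha_{k+1}/\varepsilon\rceil$, query the oracle $m_{k+1}$ times independently at $y_{k+1}$, $\tilde\nabla^{m_{k+1}}f_\delta(y_{k+1})=\frac1{m_{k+1}}\sum_j\nabla f_\delta(y_{k+1};\xi_j)$; (iv) $u_{k+1}=\arg\min_{x\in Q}\{V(x,u_k)+\alpha_{k+1}(f_\delta(y_{k+1})+\langle\tilde\nabla^{m_{k+1}}f_\delta(y_{k+1}),x-y_{k+1}\rangle+h(x))\}$; (v) $x_{k+1}=(\alpha_{k+1}u_{k+1}+A_kx_k)/A_{k+1}$; (vi) if $f_\delta(x_{k+1})\le f_\delta(y_{k+1})+\langle\tilde\nabla^{m_{k+1}}f_\delta(y_{k+1}),x_{k+1}-y_{k+1}\rangle+\frac{L_{k+1}}2\|x_{k+1}-y_{k+1}\|^2+\frac{3D\tilde\Omega}{L_{k+1}m_{k+1}}+\delta$, set $L_{k+2}=L_{k+1}/2$ and go on; otherwise replace $L_{k+1}$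 by $2L_{k+1}$ and repeat step $k+1$. *)

theory Defs
  imports "HOL-Analysis.Analysis"
begin

definition strongly_convex_on :: "'a::real_normed_vector set \<Rightarrow> real \<Rightarrow> ('a \<Rightarrow> real) \<Rightarrow> bool" where
  "strongly_convex_on S \<mu> d \<longleftrightarrow>
     (\<forall>x\<in>S. \<forall>y\<in>S. \<forall>t::real. 0 \<le> t \<and> t \<le> 1 \<longrightarrow>
        d ((1 - t) *\<^sub>R x + t *\<^sub>R y) \<le> (1 - t) * d x + t * d y - \<mu> / 2 * t * (1 - t) * (norm (x - y))\<^sup>2)"

definition bregman :: "('a::real_inner \<Rightarrow> real) \<Rightarrow> ('a \<Rightarrow> 'a) \<Rightarrow> 'a \<Rightarrow> 'a \<Rightarrow> real" where
  "bregman d gd x y = d x - d y - inner (gd y) (x - y)"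

text \<open>Stochastic linear model l(x;y) = f_delta(y) + <g, x - y> with g the minibatch gradient.\<close>
definition lmodel :: "real \<Rightarrow> 'a::real_inner \<Rightarrow> 'a \<Rightarrow> 'a \<Rightarrow> real" where
  "lmodel fy g y x = fy + inner g (x - y)"

end

theory Submission
  imports Defs
begin

text \<open>Three-point descent estimate for the mirror step: the prox-optimality of \<open>u'\<close>,
  read off along segments from \<open>u'\<close>, yields
  \<open>\<alpha> \<psi> u' + V(u',u) \<le> \<alpha> \<psi> x + V(x,u) - V(x,u')\<close> with \<open>\<psi> = l + h\<close>, and strong convexity
  of \<open>d\<close> gives \<open>V(u',u) \<ge> \<parallel>u' - u\<parallel>\<^sup>2/2\<close>. Since \<open>x' - y = (\<alpha>/A')(u' - u)\<close> and
  \<open>A' = L \<alpha>\<^sup>2\<close>, the quadratic term \<open>L/2 \<parallel>x' - y\<parallel>\<^sup>2\<close> equals \<open>\<parallel>u' - u\<parallel>\<^sup>2/(2A')\<close>; the claim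
  follows by writing \<open>x'\<close> as a convex combination of \<open>x\<^sub>k\<close> and \<open>u'\<close>, using that the
  model is affine and \<open>h\<close> convex.\<close>

lemma has_derivative_segment_lower_bound:
  fixes f :: "'a::real_normed_vector \<Rightarrow> real"
  assumes f': "(f has_derivative f') (at p within S)"
    and "convex S" and "p \<in> S" and "q \<in> S"
    and lower: "\<And>t. 0 < t \<Longrightarrow> t \<le> 1 \<Longrightarrow> t * a - t\<^sup>2 * b \<le> f (p + t *\<^sub>R (q - p)) - f p"
  shows "a \<le> f' (q - p)"
proof -
  define \<gamma> where "\<gamma> = (\<lambda>t::real. p + t *\<^sub>R (q - p))"
  have \<gamma>: "(\<gamma> has_derivative (\<lambda>t. t *\<^sub>R (q - p))) (at 0 within {0..1})"
    unfolding \<gamma>_def by (auto intro!: derivative_eq_intros)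
  have "\<gamma> ` {0..1} \<subseteq> S"
    using assms(2-4) by (auto simp: \<gamma>_def convex_alt algebra_simps)
  with f' have "(f has_derivative f') (at (\<gamma> 0) within \<gamma> ` {0..1})"
    by (simp add: \<gamma>_def has_derivative_subset)
  from diff_chain_within[OF \<gamma> this]
  have "((f \<circ> \<gamma>) has_field_derivative f' (q - p)) (at 0 within {0..1})"
    using linear_cmul[OF has_derivative_linear[OF f']]
    by (simp add: has_field_derivative_def o_def mult.commute[of _ "f' (q - p)"])
  hence "((\<lambda>t. (f (\<gamma> t) - f p) / t) \<longlongrightarrow> f' (q - p)) (at_right 0)"
    by (simp add: has_field_derivative_iff at_within_Icc_at_right \<gamma>_def)
  moreover have "((\<lambda>t. a - t * b) \<longlongrightarrow> a) (at_right 0)"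
    by (auto intro!: tendsto_eq_intros)
  moreover have "\<forall>\<^sub>F t in at_right 0. a - t * b \<le> (f (\<gamma> t) - f p) / t"
  proof -
    have "\<forall>\<^sub>F t in at_right 0. 0 < t \<and> t < (1::real)"
      unfolding eventually_at_right_field by (intro exI[of _ 1]) auto
    then show ?thesis
      by eventually_elim (use lower in \<open>auto simp: \<gamma>_def field_simps power2_eq_square\<close>)
  qed
  ultimately show ?thesis
    by (rule tendsto_le[OF trivial_limit_at_right_real])
qed

lemma bregman_three_point:
  "bregman d gd x u - bregman d gd x v - bregman d gd v u = inner (gd v - gd u) (x - v)"
  by (simp add: bregman_def inner_diff_left inner_diff_right algebra_simps)

lemma strongly_convex_on_bregman_lower_bound:
  fixes d :: "'a::real_inner \<Rightarrow> real"
  assumes sc: "strongly_convex_on S \<mu> d"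
    and d': "(d has_derivative (\<lambda>v. inner (gd y) v)) (at y within S)"
    and "convex S" and x: "x \<in> S" and y: "y \<in> S"
  shows "\<mu> / 2 * (norm (x - y))\<^sup>2 \<le> bregman d gd x y"
proof -
  define n where "n = (norm (x - y))\<^sup>2"
  have "- (d x - d y - \<mu> / 2 * n) \<le> - inner (gd y) (x - y)"
  proof (rule has_derivative_segment_lower_bound[OF has_derivative_minus[OF d'] \<open>convex S\<close> y x])
    fix t :: real assume "0 < t" "t \<le> 1"
    with sc x y have "d ((1 - t) *\<^sub>R y + t *\<^sub>R x) \<le> (1 - t) * d y + t * d x - \<mu> / 2 * t * (1 - t) * n"
      by (auto simp: strongly_convex_on_def n_def norm_minus_commute)
    moreover have "y + t *\<^sub>R (x - y) = (1 - t) *\<^sub>R y + t *\<^sub>R x"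
      by (simp add: algebra_simps)
    ultimately show "t * - (d x - d y - \<mu> / 2 * n) - t\<^sup>2 * (\<mu> / 2 * n) \<le> - d (y + t *\<^sub>R (x - y)) - - d y"
      by (simp add: power2_eq_square algebra_simps add_divide_distrib diff_divide_distrib)
  qed
  then show ?thesis
    by (simp add: bregman_def n_def)
qed

lemma bregman_prox_three_point:
  fixes d \<psi> :: "'a::real_inner \<Rightarrow> real"
  assumes "convex S" and \<psi>: "convex_on S \<psi>" and "0 \<le> \<alpha>"
    and d': "\<And>z. z \<in> S \<Longrightarrow> (d has_derivative (\<lambda>v. inner (gd z) v)) (at z within S)"
    and u': "u' \<in> S"
    and u'_min: "\<And>z. z \<in> S \<Longrightarrow> bregman d gd u' u + \<alpha> * \<psi> u' \<le> bregman d gd z u + \<alpha> * \<psi> z"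
    and x: "x \<in> S"
  shows "\<alpha> * \<psi> u' + bregman d gd u' u \<le> \<alpha> * \<psi> x + bregman d gd x u - bregman d gd x u'"
proof -
  define a where "a = inner (gd u) (x - u') - \<alpha> * (\<psi> x - \<psi> u')"
  have "a \<le> inner (gd u') (x - u')"
  proof (rule has_derivative_segment_lower_bound[OF d'[OF u'] \<open>convex S\<close> u' x, where b = 0])
    fix t :: real assume t: "0 < t" "t \<le> 1"
    define z where "z = (1 - t) *\<^sub>R u' + t *\<^sub>R x"
    have z: "z \<in> S"
      using \<open>convex S\<close> u' x t by (simp add: z_def convex_def)
    have "\<alpha> * \<psi> z \<le> \<alpha> * ((1 - t) * \<psi> u' + t * \<psi> x)"
      using convex_onD[OF \<psi>, of t u' x] t u' x \<open>0 \<le> \<alpha>\<close> by (simp add: z_def mult_left_mono)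
    moreover have "bregman d gd z u - bregman d gd u' u = d z - d u' - t * inner (gd u) (x - u')"
      by (simp add: bregman_def z_def inner_diff_right inner_add_right algebra_simps)
    ultimately have "t * a \<le> d z - d u'"
      using u'_min[OF z] by (simp add: a_def algebra_simps)
    moreover have "u' + t *\<^sub>R (x - u') = z"
      by (simp add: z_def algebra_simps)
    ultimately show "t * a - t\<^sup>2 * 0 \<le> d (u' + t *\<^sub>R (x - u')) - d u'"
      by simp
  qed
  then show ?thesis
    using bregman_three_point[of d gd x u u'] by (simp add: a_def inner_diff_left algebra_simps)
qed

lemma lmodel_convex_combination:
  "lmodel fy g y ((1 - s) *\<^sub>R a + s *\<^sub>R b) = (1 - s) * lmodel fy g y a + s * lmodel fy g y b"
  by (simp add: lmodel_def inner_diff_right inner_add_right algebra_simps)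

lemma convex_on_lmodel: "convex S \<Longrightarrow> convex_on S (lmodel fy g y)"
  by (rule convex_onI) (simp add: lmodel_convex_combination)

lemma convex_on_weighted_mean:
  assumes \<psi>: "convex_on S \<psi>" and "0 \<le> A" "0 \<le> \<alpha>" "0 < A + \<alpha>" and "x \<in> S" "u \<in> S"
  shows "\<psi> ((1 / (A + \<alpha>)) *\<^sub>R (\<alpha> *\<^sub>R u + A *\<^sub>R x)) \<le> (A * \<psi> x + \<alpha> * \<psi> u) / (A + \<alpha>)"
proof -
  define s where "s = \<alpha> / (A + \<alpha>)"
  have "0 \<le> s" "s \<le> 1" "1 - s = A / (A + \<alpha>)"
    using assms(2-4) by (auto simp: s_def field_simps)
  moreover have "(1 / (A + \<alpha>)) *\<^sub>R (\<alpha> *\<^sub>R u + A *\<^sub>R x) = (1 - s) *\<^sub>R x + s *\<^sub>R u"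
    using \<open>1 - s = A / (A + \<alpha>)\<close> by (simp add: s_def scaleR_add_right add.commute)
  ultimately show ?thesis
    using convex_onD[OF \<psi>, of s x u] \<open>x \<in> S\<close> \<open>u \<in> S\<close> by (simp add: s_def add_divide_distrib)
qed

lemma largest_quadratic_root_pos:
  fixes L A \<alpha> :: real
  assumes "0 < L" "0 \<le> A" and largest: "\<And>\<beta>. A + \<beta> = L * \<beta>\<^sup>2 \<Longrightarrow> \<beta> \<le> \<alpha>"
  shows "0 < \<alpha>"
proof -
  define r where "r = sqrt (1 + 4 * L * A)"
  have "r\<^sup>2 = 1 + 4 * L * A" "0 \<le> r"
    using assms by (simp_all add: r_def)
  then have "A + (1 + r) / (2 * L) = L * ((1 + r) / (2 * L))\<^sup>2"
    using \<open>0 < L\<close> by (simp add: power2_eq_square field_simps)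
  then have "(1 + r) / (2 * L) \<le> \<alpha>"
    by (rule largest)
  moreover have "0 < (1 + r) / (2 * L)"
    using \<open>0 \<le> r\<close> \<open>0 < L\<close> by simp
  ultimately show ?thesis
    by linarith
qed

lemma triangle_step_quadratic_term:
  fixes u u' x :: "'a::real_normed_vector"
  assumes "0 < L" "0 < \<alpha>" and root: "A + \<alpha> = L * \<alpha>\<^sup>2"
  shows "L / 2 * (norm ((1 / (A + \<alpha>)) *\<^sub>R (\<alpha> *\<^sub>R u' + A *\<^sub>R x) - (1 / (A + \<alpha>)) *\<^sub>R (\<alpha> *\<^sub>R u + A *\<^sub>R x)))\<^sup>2
    = (norm (u' - u))\<^sup>2 / (2 * (A + \<alpha>))"
proof -
  have "(1 / (A + \<alpha>)) *\<^sub>R (\<alpha> *\<^sub>R u' + A *\<^sub>R x) - (1 / (A + \<alpha>)) *\<^sub>R (\<alpha> *\<^sub>R u + A *\<^sub>R x)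
      = (\<alpha> / (A + \<alpha>)) *\<^sub>R (u' - u)"
    by (simp add: algebra_simps)
  then have "(norm ((1 / (A + \<alpha>)) *\<^sub>R (\<alpha> *\<^sub>R u' + A *\<^sub>R x) - (1 / (A + \<alpha>)) *\<^sub>R (\<alpha> *\<^sub>R u + A *\<^sub>R x)))\<^sup>2
      = (\<alpha> / (A + \<alpha>))\<^sup>2 * (norm (u' - u))\<^sup>2"
    by (simp only: norm_scaleR power_mult_distrib power2_abs)
  moreover have "0 < A + \<alpha>"
    using root assms(1,2) by simp
  ultimately show ?thesis
    using root \<open>0 < \<alpha>\<close> by (simp add: power2_eq_square field_simps)
qed

theorem lemma7:
  fixes Q :: "'a::euclidean_space set"
    and d :: "'a \<Rightarrow> real" and gd :: "'a \<Rightarrow> 'a"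
    and h :: "'a \<Rightarrow> real"
    and Lk A \<alpha> A' fy :: real
    and xk uk y g u' x' :: 'a
  assumes Q: "convex Q" "closed Q" "bounded Q"
    and h: "convex_on Q h"
    and d_deriv: "\<And>z. z \<in> Q \<Longrightarrow> (d has_derivative (\<lambda>v. inner (gd z) v)) (at z within Q)"
    and d_C1: "continuous_on Q gd"
    and d_sc: "strongly_convex_on Q 1 d"
    and Lk: "Lk > 0" and A: "A \<ge> 0"
    and alpha_root: "A + \<alpha> = Lk * \<alpha>\<^sup>2"
    and alpha_largest: "\<And>\<beta>. A + \<beta> = Lk * \<beta>\<^sup>2 \<Longrightarrow> \<beta> \<le> \<alpha>"
    and A': "A' = A + \<alpha>"
    and xk: "xk \<in> Q" and uk: "uk \<in> Q"
    and y: "y = (1 / A') *\<^sub>R (\<alpha> *\<^sub>R uk + A *\<^sub>R xk)"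
    and u'Q: "u' \<in> Q"
    and u'min: "\<And>z. z \<in> Q \<Longrightarrow>
        bregman d gd u' uk + \<alpha> * (lmodel fy g y u' + h u')
          \<le> bregman d gd z uk + \<alpha> * (lmodel fy g y z + h z)"
    and x': "x' = (1 / A') *\<^sub>R (\<alpha> *\<^sub>R u' + A *\<^sub>R xk)"
  shows "\<forall>x\<in>Q. lmodel fy g y x' + Lk / 2 * (norm (x' - y))\<^sup>2 + h x'
     \<le> A / A' * (lmodel fy g y xk + h xk)
       + \<alpha> / A' * (lmodel fy g y x + h x + 1 / \<alpha> * bregman d gd x uk - 1 / \<alpha> * bregman d gd x u')"
proof
  fix x assume x: "x \<in> Q"
  have \<alpha>: "0 < \<alpha>"
    using Lk A alpha_largest by (rule largest_quadratic_root_pos)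
  then have "0 < A'"
    using A A' by simp
  define \<psi> where "\<psi> = (\<lambda>z. lmodel fy g y z + h z)"
  have \<psi>_convex: "convex_on Q \<psi>"
    unfolding \<psi>_def using convex_on_lmodel[OF Q(1)] h by (rule convex_on_add)
  have prox: "\<alpha> * \<psi> u' + bregman d gd u' uk \<le> \<alpha> * \<psi> x + bregman d gd x uk - bregman d gd x u'"
    using Q(1) \<psi>_convex less_imp_le[OF \<alpha>] d_deriv u'Q u'min x
    unfolding \<psi>_def by (rule bregman_prox_three_point)
  have strong: "(norm (u' - uk))\<^sup>2 / 2 \<le> bregman d gd u' uk"
    using strongly_convex_on_bregman_lower_bound[of Q 1 d gd uk u'] d_sc d_deriv[OF uk] Q(1) u'Q uk by simp
  have "\<psi> x' \<le> (A * \<psi> xk + \<alpha> * \<psi> u') / A'"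
    using convex_on_weighted_mean[OF \<psi>_convex A less_imp_le[OF \<alpha>] _ xk u'Q] \<alpha> A
    by (simp add: x' A')
  moreover have "Lk / 2 * (norm (x' - y))\<^sup>2 = (norm (u' - uk))\<^sup>2 / (2 * A')"
    using triangle_step_quadratic_term[OF Lk \<alpha> alpha_root] by (simp add: x' y A')
  ultimately have "\<psi> x' + Lk / 2 * (norm (x' - y))\<^sup>2 \<le> (A * \<psi> xk + \<alpha> * \<psi> u' + (norm (u' - uk))\<^sup>2 / 2) / A'"
    by (simp add: add_divide_distrib)
  also have "\<dots> \<le> (A * \<psi> xk + \<alpha> * \<psi> x + bregman d gd x uk - bregman d gd x u') / A'"
    using prox strong \<open>0 < A'\<close> by (simp add: divide_right_mono)
  also have "\<dots> = A / A' * \<psi> xk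
      + \<alpha> / A' * (\<psi> x + 1 / \<alpha> * bregman d gd x uk - 1 / \<alpha> * bregman d gd x u')"
    using \<alpha> \<open>0 < A'\<close> by (simp add: field_simps)
  finally show "lmodel fy g y x' + Lk / 2 * (norm (x' - y))\<^sup>2 + h x'
     \<le> A / A' * (lmodel fy g y xk + h xk)
       + \<alpha> / A' * (lmodel fy g y x + h x + 1 / \<alpha> * bregman d gd x uk - 1 / \<alpha> * bregman d gd x u')"
    by (simp add: \<psi>_def algebra_simps)
qed

end
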